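(* For every Halin graph $H$, $AT(H)\le 4$.
   Context: All graphs are finite and simple. A Halin graph $H=T\cup C_n$ is a plane graph obtained from a plane tree $T$ having no vertex of degree two and at least one vertex of degree at least three, by adding a cycle $C_n$ that connects all the leaves of $T$ in the cyclic order determined by the planar drawing of $T$. For a digraph $D$, an Eulerian subdigraph is a spanning subdigraph (a subset of the arcs, possibly empty) in which every vertex has indegree equal to outdegree; it is even or odd according to the parity of its number of arcs. The Alon–Tarsi number $AT(G)$ is the smallest integer $k$ such that $G$ has an orientation $D$ with maximum outdegree at most $k-1$ for which the numbers of even and odd Eulerian subdigraphs of $D$ differ. *)

theory Defs
  imports Main
begin

definition simple_graph :: "'a set \<Rightarrow> 'a set set \<Rightarrow> bool" where
  "simple_graph V E \<longleftrightarrow> finite V \<and>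
     (\<forall>e\<in>E. \<exists>u v. e = {u, v} \<and> u \<noteq> v \<and> u \<in> V \<and> v \<in> V)"

definition nbrs :: "'a set set \<Rightarrow> 'a \<Rightarrow> 'a set" where
  "nbrs E v = {u. {u, v} \<in> E}"

definition deg :: "'a set set \<Rightarrow> 'a \<Rightarrow> nat" where
  "deg E v = card (nbrs E v)"

definition connected_graph :: "'a set \<Rightarrow> 'a set set \<Rightarrow> bool" where
  "connected_graph V E \<longleftrightarrow>
     (\<forall>u\<in>V. \<forall>v\<in>V. (u, v) \<in> {(x, y). {x, y} \<in> E}\<^sup>*)"

definition is_tree :: "'a set \<Rightarrow> 'a set set \<Rightarrow> bool" where
  "is_tree V E \<longleftrightarrow> simple_graph V E \<and> V \<noteq> {} \<and> connected_graph V E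
     \<and> card E + 1 = card V"

text \<open>A planar drawing of a tree is encoded combinatorially by a rotation system:
  at each vertex v, rot v is a cyclic permutation of the neighbours of v.\<close>

definition rotation_system :: "'a set \<Rightarrow> 'a set set \<Rightarrow> ('a \<Rightarrow> 'a \<Rightarrow> 'a) \<Rightarrow> bool" where
  "rotation_system V E rot \<longleftrightarrow>
     (\<forall>v\<in>V. bij_betw (rot v) (nbrs E v) (nbrs E v) \<and>
        (\<forall>x\<in>nbrs E v. \<forall>y\<in>nbrs E v. \<exists>k. (rot v ^^ k) x = y))"

text \<open>Face-tracing map on darts: (u,v) goes to (v, rot v u).  For a plane tree
  its (single) orbit is the boundary walk around the tree.\<close>
definition face_step :: "('a \<Rightarrow> 'a \<Rightarrow> 'a) \<Rightarrow> 'a \<times> 'a \<Rightarrow> 'a \<times> 'a" where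
  "face_step rot d = (snd d, rot (snd d) (fst d))"

definition is_leaf :: "'a set set \<Rightarrow> 'a \<Rightarrow> bool" where
  "is_leaf E v \<longleftrightarrow> deg E v = 1"

text \<open>l' is the leaf following leaf l in the cyclic order of leaves determined
  by the plane tree: walking around the tree starting at the dart entering l,
  l' is the next leaf entered.\<close>
definition leaf_succ :: "'a set set \<Rightarrow> ('a \<Rightarrow> 'a \<Rightarrow> 'a) \<Rightarrow> 'a \<Rightarrow> 'a \<Rightarrow> bool" where
  "leaf_succ E rot l l' \<longleftrightarrow> is_leaf E l \<and> is_leaf E l' \<and>
     (\<exists>u k. {u, l} \<in> E \<and> 0 < k \<and>
        snd ((face_step rot ^^ k) (u, l)) = l' \<and>
        (\<forall>j. 0 < j \<and> j < k \<longrightarrow> \<not> is_leaf E (snd ((face_step rot ^^ j) (u, l)))))"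

definition halin :: "'a set \<Rightarrow> 'a set set \<Rightarrow> bool" where
  "halin V E \<longleftrightarrow> (\<exists>ET rot.
     is_tree V ET \<and> rotation_system V ET rot \<and>
     (\<forall>v\<in>V. deg ET v \<noteq> 2) \<and> (\<exists>v\<in>V. deg ET v \<ge> 3) \<and>
     E = ET \<union> {{l, l'} | l l'. leaf_succ ET rot l l'})"

definition orientation :: "'a set \<Rightarrow> 'a set set \<Rightarrow> ('a \<times> 'a) set \<Rightarrow> bool" where
  "orientation V E D \<longleftrightarrow> (\<forall>(u, v)\<in>D. {u, v} \<in> E) \<and>
     (\<forall>e\<in>E. \<exists>!a. a \<in> D \<and> e = {fst a, snd a})"

definition outdeg :: "('a \<times> 'a) set \<Rightarrow> 'a \<Rightarrow> nat" where
  "outdeg D v = card {w. (v, w) \<in> D}"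

definition indeg :: "('a \<times> 'a) set \<Rightarrow> 'a \<Rightarrow> nat" where
  "indeg D v = card {u. (u, v) \<in> D}"

definition eulerian_sub :: "'a set \<Rightarrow> ('a \<times> 'a) set \<Rightarrow> ('a \<times> 'a) set \<Rightarrow> bool" where
  "eulerian_sub V D S \<longleftrightarrow> S \<subseteq> D \<and> (\<forall>v\<in>V. indeg S v = outdeg S v)"

definition even_euler :: "'a set \<Rightarrow> ('a \<times> 'a) set \<Rightarrow> nat" where
  "even_euler V D = card {S. eulerian_sub V D S \<and> even (card S)}"

definition odd_euler :: "'a set \<Rightarrow> ('a \<times> 'a) set \<Rightarrow> nat" where
  "odd_euler V D = card {S. eulerian_sub V D S \<and> odd (card S)}"

definition AT :: "'a set \<Rightarrow> 'a set set \<Rightarrow> nat" where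
  "AT V E = (LEAST k. \<exists>D. orientation V E D \<and> (\<forall>v\<in>V. outdeg D v + 1 \<le> k)
                \<and> even_euler V D \<noteq> odd_euler V D)"

end

theory Submission
  imports Defs
begin

text \<open>A Halin graph is 3-degenerate. Rank the vertices of the tree T by repeatedly deleting leaves,
  so that every vertex has at most one tree neighbour of smaller rank. The leaf cycle only adds
  edges between leaves, and each leaf has exactly one tree neighbour and two cycle neighbours, so
  in H every vertex has at most three neighbours of smaller rank. Orienting every edge towards the
  smaller rank gives an acyclic orientation with maximum outdegree 3, whose only Eulerian
  subdigraph is the empty one; hence the even and odd counts are 1 and 0.

  The only delicate point is that the leaf cycle has no loops, i.e. the face walk from a leaf
  meets another leaf before returning: otherwise it would be a closed walk in the tree that never
  backtracks, since the rotation at a vertex of degree at least 3 has no fixed point.\<close>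

section \<open>Simple graphs and trees\<close>

lemma simple_graph_edgeD:
  assumes "simple_graph V E" and "{u, v} \<in> E"
  shows "u \<in> V" and "v \<in> V" and "u \<noteq> v"
proof -
  obtain x y where "{u, v} = {x, y}" "x \<noteq> y" "x \<in> V" "y \<in> V"
    using assms unfolding simple_graph_def by blast
  then have "u \<in> V \<and> v \<in> V \<and> u \<noteq> v" by (auto simp: doubleton_eq_iff)
  then show "u \<in> V" "v \<in> V" "u \<noteq> v" by simp_all
qed

lemma simple_graph_finite_edges:
  assumes "simple_graph V E"
  shows "finite E"
proof (rule finite_subset)
  show "E \<subseteq> Pow V"
  proof
    fix e assume "e \<in> E"
    then obtain u v where "e = {u, v}" "u \<in> V" "v \<in> V"
      using assms unfolding simple_graph_def by blast
    then show "e \<in> Pow V" by simp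
  qed
  show "finite (Pow V)" using assms by (simp add: simple_graph_def)
qed

lemma simple_graph_finite_nbrs:
  assumes "simple_graph V E"
  shows "finite (nbrs E v)"
proof (rule finite_subset)
  show "nbrs E v \<subseteq> V" using simple_graph_edgeD(1)[OF assms] unfolding nbrs_def by blast
  show "finite V" using assms by (simp add: simple_graph_def)
qed

lemma is_leaf_nbrs:
  assumes "is_leaf E l"
  obtains p where "nbrs E l = {p}"
  using assms unfolding is_leaf_def deg_def by (metis card_1_singletonE)

lemma sum_deg_le_twice_card_edges:
  assumes sg: "simple_graph V E"
  shows "(\<Sum>v\<in>V. deg E v) \<le> 2 * card E"
proof -
  have fV: "finite V" using sg by (simp add: simple_graph_def)
  have fE: "finite E" using simple_graph_finite_edges[OF sg] .
  define arcs where "arcs e = {(a, b). a \<in> e \<and> b \<in> e \<and> a \<noteq> b}" for e :: "'a set"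
  have arcs_edge: "arcs {x, y} = {(x, y), (y, x)}" if "x \<noteq> y" for x y
    using that unfolding arcs_def by auto
  have "(\<Sum>v\<in>V. deg E v) = card (Sigma V (nbrs E))"
    using fV simple_graph_finite_nbrs[OF sg] by (simp add: deg_def card_SigmaI)
  also have "\<dots> \<le> card (\<Union>e\<in>E. arcs e)"
  proof (rule card_mono)
    have "arcs e \<subseteq> V \<times> V" if "e \<in> E" for e
      using sg that unfolding simple_graph_def arcs_def by fastforce
    then have "(\<Union>e\<in>E. arcs e) \<subseteq> V \<times> V" by blast
    then show "finite (\<Union>e\<in>E. arcs e)"
      using finite_subset fV by blast
    show "Sigma V (nbrs E) \<subseteq> (\<Union>e\<in>E. arcs e)"
    proof
      fix z assume "z \<in> Sigma V (nbrs E)"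
      then obtain v u where z: "z = (v, u)" and uv: "{u, v} \<in> E" by (auto simp: nbrs_def)
      then have "z \<in> arcs {u, v}"
        using simple_graph_edgeD(3)[OF sg uv] unfolding arcs_def by auto
      then show "z \<in> (\<Union>e\<in>E. arcs e)" using uv by blast
    qed
  qed
  also have "\<dots> \<le> (\<Sum>e\<in>E. card (arcs e))"
    by (rule card_UN_le[OF fE])
  also have "\<dots> \<le> (\<Sum>e\<in>E. 2)"
  proof (rule sum_mono)
    fix e assume "e \<in> E"
    then obtain x y where "e = {x, y}" "x \<noteq> y" using sg unfolding simple_graph_def by blast
    then show "card (arcs e) \<le> 2" using arcs_edge by (simp add: card_insert_le)
  qed
  finally show ?thesis by simp
qed

lemma tree_has_leaf:
  assumes tree: "is_tree V E" and two: "2 \<le> card V"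
  obtains l where "l \<in> V" and "is_leaf E l"
proof -
  note leaf_thesis = that
  have sg: "simple_graph V E" and conn: "connected_graph V E" and cE: "card E + 1 = card V"
    using tree unfolding is_tree_def by simp_all
  have "nbrs E v \<noteq> {}" if vV: "v \<in> V" for v
  proof -
    have "V \<noteq> {v}" using two by auto
    then obtain u where u: "u \<in> V" "u \<noteq> v" using vV by blast
    have "(v, u) \<in> {(x, y). {x, y} \<in> E}\<^sup>*"
      using conn vV u(1) unfolding connected_graph_def by blast
    then obtain y where "(v, y) \<in> {(x, y). {x, y} \<in> E}"
      using u(2) by (cases rule: converse_rtranclE) auto
    then have "y \<in> nbrs E v" by (simp add: nbrs_def insert_commute)
    then show ?thesis by blast
  qed
  then have pos: "0 < deg E v" if "v \<in> V" for v
    using that simple_graph_finite_nbrs[OF sg] by (simp add: deg_def card_gt_0_iff)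
  show ?thesis
  proof (rule ccontr)
    assume no_leaf: "\<not> thesis"
    have "2 \<le> deg E v" if "v \<in> V" for v
    proof -
      have "\<not> is_leaf E v" using no_leaf leaf_thesis that by blast
      then show ?thesis using pos[OF \<open>v \<in> V\<close>] unfolding is_leaf_def by linarith
    qed
    then have "(\<Sum>v\<in>V. 2) \<le> (\<Sum>v\<in>V. deg E v)" by (intro sum_mono)
    with sum_deg_le_twice_card_edges[OF sg] cE show False by simp
  qed
qed

lemma edges_delete_leaf:
  assumes sg: "simple_graph V E" and nl: "nbrs E l = {p}"
  shows "{e\<in>E. l \<notin> e} = E - {{p, l}}"
proof (rule set_eqI, rule iffI)
  fix e assume "e \<in> {e\<in>E. l \<notin> e}"
  then show "e \<in> E - {{p, l}}" by auto
next
  fix e assume e: "e \<in> E - {{p, l}}"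
  then obtain x y where xy: "e = {x, y}" using sg unfolding simple_graph_def by blast
  have "x \<noteq> l"
  proof
    assume "x = l"
    then have "y \<in> nbrs E l" using e xy by (simp add: nbrs_def insert_commute)
    then show False using e xy nl \<open>x = l\<close> by (simp add: insert_commute)
  qed
  moreover have "y \<noteq> l"
  proof
    assume "y = l"
    then have "x \<in> nbrs E l" using e xy by (simp add: nbrs_def)
    then show False using e xy nl \<open>y = l\<close> by simp
  qed
  ultimately show "e \<in> {e\<in>E. l \<notin> e}" using e xy by simp
qed

lemma simple_graph_delete_vertex:
  assumes sg: "simple_graph V E"
  shows "simple_graph (V - {l}) {e\<in>E. l \<notin> e}"
  unfolding simple_graph_def
proof (intro conjI ballI)
  show "finite (V - {l})" using sg by (simp add: simple_graph_def)
  fix e assume "e \<in> {e\<in>E. l \<notin> e}"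
  then have eE: "e \<in> E" and le: "l \<notin> e" by simp_all
  obtain x y where xy: "e = {x, y}" "x \<noteq> y" "x \<in> V" "y \<in> V"
    using sg eE unfolding simple_graph_def by blast
  then have "x \<in> V - {l}" "y \<in> V - {l}" using le by auto
  then show "\<exists>u v. e = {u, v} \<and> u \<noteq> v \<and> u \<in> V - {l} \<and> v \<in> V - {l}" using xy by blast
qed

lemma connected_graph_delete_leaf:
  assumes sg: "simple_graph V E" and conn: "connected_graph V E" and nl: "nbrs E l = {p}"
  shows "connected_graph (V - {l}) {e\<in>E. l \<notin> e}"
proof -
  let ?R = "{(x, y). {x, y} \<in> E}"
  let ?R' = "{(x, y). {x, y} \<in> {e\<in>E. l \<notin> e}}"
  have "{p, l} \<in> E" using nl by (simp add: nbrs_def set_eq_iff)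
  then have pl: "p \<noteq> l" using simple_graph_edgeD(3)[OF sg] by blast
  text \<open>A walk from u \<noteq> l enters and leaves the leaf l through p, so its visits to l can be
    dropped.\<close>
  have redirect: "(u, if x = l then p else x) \<in> ?R'\<^sup>*" if "(u, x) \<in> ?R\<^sup>*" "u \<noteq> l" for u x
    using that(1)
  proof (induction rule: rtrancl_induct)
    case base
    then show ?case using that(2) by simp
  next
    case (step y x)
    have e: "{y, x} \<in> E" using step.hyps(2) by simp
    consider "y = l" | "y \<noteq> l" "x = l" | "y \<noteq> l" "x \<noteq> l" by blast
    then show ?case
    proof cases
      case 1
      then have "x \<in> nbrs E l" using e by (simp add: nbrs_def insert_commute)
      then have "x = p" using nl by simp
      then show ?thesis using step.IH 1 pl by simp
    next
      case 2
      then have "y \<in> nbrs E l" using e by (simp add: nbrs_def)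
      then have "y = p" using nl by simp
      then show ?thesis using step.IH 2 by simp
    next
      case 3
      then have "(y, x) \<in> ?R'" using e by simp
      then show ?thesis using step.IH 3 by (simp add: rtrancl_into_rtrancl)
    qed
  qed
  show ?thesis unfolding connected_graph_def
  proof (intro ballI)
    fix u w assume uw: "u \<in> V - {l}" "w \<in> V - {l}"
    then have "(u, w) \<in> ?R\<^sup>*" using conn unfolding connected_graph_def by blast
    then show "(u, w) \<in> ?R'\<^sup>*" using redirect[of u w] uw by simp
  qed
qed

lemma is_tree_delete_leaf:
  assumes tree: "is_tree V E" and lV: "l \<in> V" and nl: "nbrs E l = {p}"
  shows "is_tree (V - {l}) {e\<in>E. l \<notin> e}"
proof -
  have sg: "simple_graph V E" and conn: "connected_graph V E" and cE: "card E + 1 = card V"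
    using tree unfolding is_tree_def by simp_all
  have plE: "{p, l} \<in> E" using nl by (simp add: nbrs_def set_eq_iff)
  have "p \<in> V" "p \<noteq> l" using simple_graph_edgeD[OF sg plE] by simp_all
  then have "V - {l} \<noteq> {}" by blast
  moreover have "card {e\<in>E. l \<notin> e} + 1 = card (V - {l})"
  proof -
    have "0 < card E" using plE simple_graph_finite_edges[OF sg] card_gt_0_iff by blast
    then show ?thesis
      using cE lV plE unfolding edges_delete_leaf[OF sg nl] by (simp add: card_Diff_singleton)
  qed
  ultimately show ?thesis
    unfolding is_tree_def
    using simple_graph_delete_vertex[OF sg] connected_graph_delete_leaf[OF sg conn nl] by blast
qed

definition lower_nbrs :: "'a set set \<Rightarrow> ('a \<Rightarrow> nat) \<Rightarrow> 'a \<Rightarrow> 'a set" where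
  "lower_nbrs E f v = {w \<in> nbrs E v. f w < f v}"

lemma lower_nbrs_subset_nbrs: "lower_nbrs E f v \<subseteq> nbrs E v"
  unfolding lower_nbrs_def by blast

lemma ranking_add_leaf:
  assumes sg: "simple_graph V E" and lV: "l \<in> V" and nl: "nbrs E l = {p}"
    and inj': "inj_on f' (V - {l})"
    and lower': "\<forall>v\<in>V - {l}. card (lower_nbrs {e\<in>E. l \<notin> e} f' v) \<le> 1"
  shows "\<exists>f :: 'a \<Rightarrow> nat. inj_on f V \<and> (\<forall>v\<in>V. card (lower_nbrs E f v) \<le> 1)"
proof -
  define V' where "V' = V - {l}"
  define E' where "E' = {e\<in>E. l \<notin> e}"
  text \<open>Ranked highest, the new leaf has the single lower neighbour p and is nobody's lower
    neighbour.\<close>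
  define M where "M = Suc (Max (f' ` V'))"
  define f where "f = f'(l := M)"
  have fV': "finite V'" using sg unfolding V'_def simple_graph_def by simp
  have below_M: "f' x < M" if "x \<in> V'" for x
    unfolding M_def using that fV' by (simp add: le_imp_less_Suc)
  have V: "V = insert l V'" unfolding V'_def using lV by blast
  have "inj_on f V'" using inj' unfolding f_def V'_def by (simp add: inj_on_def)
  moreover have "f l \<notin> f ` (V' - {l})" using below_M unfolding f_def V'_def by auto
  ultimately have "inj_on f V" unfolding V by simp
  moreover have "card (lower_nbrs E f v) \<le> 1" if vV: "v \<in> V" for v
  proof (cases "v = l")
    case True
    have "lower_nbrs E f v \<subseteq> {p}" using True nl lower_nbrs_subset_nbrs by metis
    then show ?thesis using card_mono[of "{p}"] by fastforce
  next
    case False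
    then have vV': "v \<in> V'" unfolding V'_def using vV by simp
    have "lower_nbrs E f v \<subseteq> lower_nbrs E' f' v"
    proof
      fix w assume "w \<in> lower_nbrs E f v"
      then have wv: "{w, v} \<in> E" "f w < f v" by (simp_all add: lower_nbrs_def nbrs_def)
      have "w \<noteq> l" using wv(2) below_M[OF vV'] False unfolding f_def by auto
      then show "w \<in> lower_nbrs E' f' v"
        using wv False unfolding lower_nbrs_def nbrs_def E'_def f_def by simp
    qed
    moreover have "finite (lower_nbrs E' f' v)"
      using simple_graph_finite_nbrs[OF simple_graph_delete_vertex[OF sg]] lower_nbrs_subset_nbrs
      unfolding E'_def by (meson finite_subset)
    ultimately show ?thesis
      using lower' vV' card_mono le_trans unfolding V'_def E'_def by metis
  qed
  ultimately show ?thesis by blast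
qed

lemma tree_ranking:
  assumes "is_tree V E"
  shows "\<exists>f :: 'a \<Rightarrow> nat. inj_on f V \<and> (\<forall>v\<in>V. card (lower_nbrs E f v) \<le> 1)"
  using assms
proof (induction "card V" arbitrary: V E)
  case 0
  then show ?case by (simp add: is_tree_def simple_graph_def)
next
  case (Suc n)
  have sg: "simple_graph V E" using Suc.prems unfolding is_tree_def by simp
  show ?case
  proof (cases "card V = 1")
    case True
    then obtain v where "V = {v}" by (rule card_1_singletonE)
    then show ?thesis by (intro exI[of _ "\<lambda>_. 0"]) (simp add: lower_nbrs_def)
  next
    case False
    then obtain l where lV: "l \<in> V" and leaf: "is_leaf E l"
      using tree_has_leaf[OF Suc.prems] Suc.hyps(2) by force
    obtain p where nl: "nbrs E l = {p}" using is_leaf_nbrs[OF leaf] .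
    have "n = card (V - {l})" using Suc.hyps(2) lV by simp
    moreover have "is_tree (V - {l}) {e\<in>E. l \<notin> e}" by (rule is_tree_delete_leaf[OF Suc.prems lV nl])
    ultimately obtain f' :: "'a \<Rightarrow> nat" where "inj_on f' (V - {l})"
      and "\<forall>v\<in>V - {l}. card (lower_nbrs {e\<in>E. l \<notin> e} f' v) \<le> 1"
      using Suc.hyps(1) by blast
    then show ?thesis by (rule ranking_add_leaf[OF sg lV nl])
  qed
qed

section \<open>Orientations induced by a ranking\<close>

definition rank_orientation :: "'a set set \<Rightarrow> ('a \<Rightarrow> nat) \<Rightarrow> ('a \<times> 'a) set" where
  "rank_orientation E f = {(u, v). {u, v} \<in> E \<and> f v < f u}"

lemma orientation_rank_orientation:
  assumes sg: "simple_graph V E" and inj: "inj_on f V"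
  shows "orientation V E (rank_orientation E f)"
  unfolding orientation_def
proof (intro conjI ballI)
  fix a assume "a \<in> rank_orientation E f"
  then show "case a of (u, v) \<Rightarrow> {u, v} \<in> E" unfolding rank_orientation_def by auto
next
  fix e assume eE: "e \<in> E"
  then obtain x y where xy: "e = {x, y}" "x \<noteq> y" "x \<in> V" "y \<in> V"
    using sg unfolding simple_graph_def by blast
  have "f x \<noteq> f y" using inj xy by (metis inj_on_eq_iff)
  then consider "f y < f x" | "f x < f y" by linarith
  then obtain a where a: "a \<in> rank_orientation E f" "e = {fst a, snd a}"
  proof cases
    case 1
    then show ?thesis using that[of "(x, y)"] eE xy(1) unfolding rank_orientation_def by simp
  next
    case 2
    then show ?thesis
      using that[of "(y, x)"] eE xy(1) unfolding rank_orientation_def by (simp add: insert_commute)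
  qed
  have "b = a" if "b \<in> rank_orientation E f" "e = {fst b, snd b}" for b
    using a that unfolding rank_orientation_def by (auto simp: doubleton_eq_iff)
  with a show "\<exists>!a. a \<in> rank_orientation E f \<and> e = {fst a, snd a}" by blast
qed

lemma outdeg_rank_orientation: "outdeg (rank_orientation E f) v = card (lower_nbrs E f v)"
proof -
  have "{w. (v, w) \<in> rank_orientation E f} = lower_nbrs E f v"
    unfolding rank_orientation_def lower_nbrs_def nbrs_def by (auto simp: insert_commute)
  then show ?thesis unfolding outdeg_def by simp
qed

text \<open>Arcs decrease the rank, so a nonempty Eulerian subdigraph would leave its lowest-ranked head.\<close>
lemma eulerian_sub_rank_orientation:
  assumes sg: "simple_graph V E" and es: "eulerian_sub V (rank_orientation E f) S"
  shows "S = {}"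
proof (rule ccontr)
  assume "S \<noteq> {}"
  then obtain a b where ab: "(a, b) \<in> S" by auto
  have arc: "{x, y} \<in> E \<and> f y < f x" if "(x, y) \<in> S" for x y
    using that es unfolding eulerian_sub_def rank_orientation_def by blast
  obtain v where "\<exists>u. (u, v) \<in> S" and v_min: "\<forall>y. (\<exists>u. (u, y) \<in> S) \<longrightarrow> f v \<le> f y"
    using ex_has_least_nat[of "\<lambda>y. \<exists>u. (u, y) \<in> S" b f] ab by blast
  then obtain u where uv: "(u, v) \<in> S" by blast
  have vV: "v \<in> V" using simple_graph_edgeD(2)[OF sg] arc[OF uv] by blast
  have "{x. (x, v) \<in> S} \<subseteq> V" using simple_graph_edgeD(1)[OF sg] arc by blast
  then have "finite {x. (x, v) \<in> S}" using sg finite_subset unfolding simple_graph_def by blast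
  then have "0 < indeg S v" unfolding indeg_def using uv by (auto simp: card_gt_0_iff)
  then have "0 < outdeg S v" using es vV unfolding eulerian_sub_def by simp
  then obtain x where vx: "(v, x) \<in> S" unfolding outdeg_def by (metis Collect_empty_eq card.empty less_irrefl)
  then have "f x < f v" using arc by blast
  moreover have "f v \<le> f x" using v_min vx by blast
  ultimately show False by simp
qed

lemma even_euler_ne_odd_euler_rank_orientation:
  assumes "simple_graph V E"
  shows "even_euler V (rank_orientation E f) \<noteq> odd_euler V (rank_orientation E f)"
proof -
  let ?D = "rank_orientation E f"
  have "eulerian_sub V ?D {}" unfolding eulerian_sub_def indeg_def outdeg_def by simp
  then have even: "{S. eulerian_sub V ?D S \<and> even (card S)} = {{}}"
    and odd: "{S. eulerian_sub V ?D S \<and> odd (card S)} = {}"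
    by (auto dest: eulerian_sub_rank_orientation[OF assms])
  show ?thesis unfolding even_euler_def odd_euler_def even odd by simp
qed

lemma AT_le_Suc_ranking:
  assumes sg: "simple_graph V E" and inj: "inj_on f V"
    and lower: "\<forall>v\<in>V. card (lower_nbrs E f v) \<le> k"
  shows "AT V E \<le> Suc k"
  unfolding AT_def
proof (rule Least_le, intro exI conjI)
  show "orientation V E (rank_orientation E f)" by (rule orientation_rank_orientation[OF sg inj])
  show "\<forall>v\<in>V. outdeg (rank_orientation E f) v + 1 \<le> Suc k"
    using lower by (simp add: outdeg_rank_orientation)
  show "even_euler V (rank_orientation E f) \<noteq> odd_euler V (rank_orientation E f)"
    by (rule even_euler_ne_odd_euler_rank_orientation[OF sg])
qed

section \<open>Non-backtracking walks\<close>

lemma lower_nbr_unique: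
  assumes sg: "simple_graph V E" and inj: "inj_on f V"
    and lower: "\<forall>v\<in>V. card (lower_nbrs E f v) \<le> 1"
    and ab: "{b, a} \<in> E" "f b \<le> f a" and ac: "{c, a} \<in> E" "f c \<le> f a"
  shows "b = c"
proof -
  have V: "a \<in> V" "b \<in> V" "c \<in> V" "b \<noteq> a" "c \<noteq> a"
    using simple_graph_edgeD[OF sg ab(1)] simple_graph_edgeD[OF sg ac(1)] by simp_all
  then have "f b < f a" "f c < f a" using inj ab(2) ac(2) by (metis inj_on_eq_iff order_le_less)+
  then have "b \<in> lower_nbrs E f a" "c \<in> lower_nbrs E f a"
    using ab(1) ac(1) by (simp_all add: lower_nbrs_def nbrs_def)
  moreover have "finite (lower_nbrs E f a)"
    using simple_graph_finite_nbrs[OF sg] lower_nbrs_subset_nbrs by (rule finite_subset[rotated])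
  ultimately show ?thesis using lower V(1) card_le_Suc0_iff_eq by (metis One_nat_def)
qed

lemma ex_max_index:
  fixes g :: "nat \<Rightarrow> 'b :: linorder"
  shows "\<exists>i0\<le>k. \<forall>i\<le>k. g i \<le> g i0"
proof -
  obtain i0 where "i0 \<in> {..k}" and max: "Max (g ` {..k}) = g i0"
    using obtains_MAX[of "{..k}"] by blast
  moreover have "g i \<le> Max (g ` {..k})" if "i \<le> k" for i
    using that by (intro Max_ge) auto
  ultimately show ?thesis by auto
qed

text \<open>The highest-ranked vertex of the walk has two lower neighbours on it, which must coincide.
  At an interior position this is a backtrack, so the maximum sits at the closing vertex.\<close>
lemma closed_nonbacktracking_walk_folds:
  fixes w :: "nat \<Rightarrow> 'a"
  assumes sg: "simple_graph V E" and inj: "inj_on f V"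
    and lower: "\<forall>v\<in>V. card (lower_nbrs E f v) \<le> 1"
    and pos: "0 < k" and edge: "\<And>i. i < k \<Longrightarrow> {w i, w (Suc i)} \<in> E"
    and no_backtrack: "\<And>i. Suc i < k \<Longrightarrow> w (Suc (Suc i)) \<noteq> w i"
    and closed: "w k = w 0"
  shows "3 \<le> k \<and> w 1 = w (k - 1)"
proof -
  have edge': "{w (Suc i), w i} \<in> E" if "i < k" for i using edge[OF that] by (simp add: insert_commute)
  have unique: "b = c" if "{b, a} \<in> E" "f b \<le> f a" "{c, a} \<in> E" "f c \<le> f a" for a b c
    using lower_nbr_unique[OF sg inj lower that] .
  obtain i0 where i0: "i0 \<le> k" and i0_max: "\<forall>i\<le>k. f (w i) \<le> f (w i0)"
    using ex_max_index[of k "\<lambda>i. f (w i)"] by blast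
  have "\<not> (0 < i0 \<and> i0 < k)"
  proof
    assume interior: "0 < i0 \<and> i0 < k"
    then obtain j where j: "i0 = Suc j" by (cases i0) auto
    have e1: "{w j, w i0} \<in> E" and e2: "{w (Suc i0), w i0} \<in> E"
      using edge[of j] edge'[of i0] interior j by simp_all
    have "w j = w (Suc i0)" by (rule unique[OF e1 _ e2]) (use i0_max interior j in auto)
    with no_backtrack[of j] interior j show False by simp
  qed
  then have "w i0 = w 0" using i0 closed by (metis le_neq_implies_less neq0_conv)
  then have max0: "\<forall>i\<le>k. f (w i) \<le> f (w 0)" using i0_max by simp
  obtain k1 where k1: "k = Suc k1" using pos by (cases k) auto
  have e1: "{w 1, w 0} \<in> E" and e2: "{w k1, w 0} \<in> E"
    using edge'[of 0] edge[of k1] pos k1 closed by simp_all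
  have w1: "w 1 = w k1" by (rule unique[OF e1 _ e2]) (use max0 k1 in auto)
  have "k1 \<noteq> 0"
  proof
    assume "k1 = 0"
    then show False using w1 simple_graph_edgeD(3)[OF sg edge[OF pos]] by simp
  qed
  moreover have "k1 \<noteq> 1" using no_backtrack[of 0] closed k1 by auto
  ultimately show ?thesis using w1 k1 by simp
qed

lemma nonbacktracking_walk_not_closed:
  fixes w :: "nat \<Rightarrow> 'a"
  assumes sg: "simple_graph V E" and inj: "inj_on f V"
    and lower: "\<forall>v\<in>V. card (lower_nbrs E f v) \<le> 1"
  shows "\<lbrakk>0 < k; \<And>i. i < k \<Longrightarrow> {w i, w (Suc i)} \<in> E;
    \<And>i. Suc i < k \<Longrightarrow> w (Suc (Suc i)) \<noteq> w i\<rbrakk> \<Longrightarrow> w k \<noteq> w 0"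
proof (induction k arbitrary: w rule: less_induct)
  case (less k)
  show ?case
  proof
    assume closed: "w k = w 0"
    have "3 \<le> k \<and> w 1 = w (k - 1)"
      by (rule closed_nonbacktracking_walk_folds[OF sg inj lower, of k w])
        (use less.prems closed in auto)
    then have k: "3 \<le> k" and folds: "w 1 = w (k - 1)" by simp_all
    have "w (Suc (k - 2)) \<noteq> w (Suc 0)"
    proof (rule less.IH[of "k - 2" "\<lambda>i. w (Suc i)"])
      show "k - 2 < k" "0 < k - 2" using k by simp_all
      show "{w (Suc i), w (Suc (Suc i))} \<in> E" if "i < k - 2" for i using less.prems(2) that by simp
      show "w (Suc (Suc (Suc i))) \<noteq> w (Suc i)" if "Suc i < k - 2" for i
        using less.prems(3) that by simp
    qed
    moreover have "Suc (k - 2) = k - 1" using k by simp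
    ultimately show False using folds by simp
  qed
qed

section \<open>Face walks of plane trees\<close>

lemma funpow_image_subset:
  assumes "g ` S \<subseteq> S"
  shows "(g ^^ n) ` S \<subseteq> S"
  using assms by (induction n) auto

lemma inj_on_funpow:
  assumes inj: "inj_on g S" and closed: "g ` S \<subseteq> S"
  shows "inj_on (g ^^ n) S"
proof (induction n)
  case 0
  then show ?case by simp
next
  case (Suc n)
  have "inj_on g ((g ^^ n) ` S)"
    using inj funpow_image_subset[OF closed] by (rule inj_on_subset)
  with Suc.IH have "inj_on (g \<circ> (g ^^ n)) S" by (rule comp_inj_on)
  then show ?case by (simp only: funpow.simps(2))
qed

lemma rotation_systemD:
  assumes "rotation_system V E rot" and "v \<in> V"
  shows "bij_betw (rot v) (nbrs E v) (nbrs E v)"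
    and "x \<in> nbrs E v \<Longrightarrow> y \<in> nbrs E v \<Longrightarrow> \<exists>k. (rot v ^^ k) x = y"
  using bspec[OF assms(1)[unfolded rotation_system_def] assms(2)] by blast+

definition darts :: "'a set set \<Rightarrow> ('a \<times> 'a) set" where
  "darts E = {(u, v). {u, v} \<in> E}"

lemma face_step_darts:
  assumes sg: "simple_graph V E" and rs: "rotation_system V E rot"
  shows "face_step rot ` darts E \<subseteq> darts E"
proof
  fix d assume "d \<in> face_step rot ` darts E"
  then obtain u v where d: "d = face_step rot (u, v)" and uv: "{u, v} \<in> E"
    by (auto simp: darts_def)
  then have "v \<in> V" "u \<in> nbrs E v" using simple_graph_edgeD[OF sg uv] by (simp_all add: nbrs_def)
  then have "rot v u \<in> nbrs E v" using rotation_systemD(1)[OF rs] by (meson bij_betwE)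
  then show "d \<in> darts E"
    using d by (simp add: face_step_def darts_def nbrs_def insert_commute)
qed

lemma inj_on_face_step:
  assumes sg: "simple_graph V E" and rs: "rotation_system V E rot"
  shows "inj_on (face_step rot) (darts E)"
proof (rule inj_onI)
  fix x y assume x: "x \<in> darts E" and y: "y \<in> darts E"
    and eq: "face_step rot x = face_step rot y"
  obtain a b c d where xy: "x = (a, b)" "y = (c, d)" by fastforce
  have bd: "b = d" using eq xy by (simp add: face_step_def)
  have rot_eq: "rot b a = rot b c" using eq xy bd by (simp add: face_step_def)
  have "{a, b} \<in> E" using x xy by (simp add: darts_def)
  then have "b \<in> V" using simple_graph_edgeD[OF sg] by blast
  then have "inj_on (rot b) (nbrs E b)" using rotation_systemD(1)[OF rs] bij_betw_imp_inj_on by blast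
  moreover have "a \<in> nbrs E b" "c \<in> nbrs E b" using x y xy bd by (simp_all add: darts_def nbrs_def)
  ultimately show "x = y" using rot_eq bd xy by (simp add: inj_on_eq_iff)
qed

lemma face_walk_darts:
  assumes "simple_graph V E" and "rotation_system V E rot" and "d \<in> darts E"
  shows "(face_step rot ^^ n) d \<in> darts E"
  using funpow_image_subset[OF face_step_darts[OF assms(1,2)]] assms(3) by blast

lemma rot_no_fixpoint:
  assumes rs: "rotation_system V E rot" and vV: "v \<in> V" and u: "u \<in> nbrs E v"
    and two: "2 \<le> card (nbrs E v)"
  shows "rot v u \<noteq> u"
proof
  assume fix_u: "rot v u = u"
  have orbit: "(rot v ^^ k) u = u" for k
    by (induction k) (simp_all add: fix_u)
  have "y = u" if y: "y \<in> nbrs E v" for y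
  proof -
    obtain k where "(rot v ^^ k) u = y" using rotation_systemD(2)[OF rs vV u y] by blast
    then show ?thesis using orbit by simp
  qed
  then have "nbrs E v \<subseteq> {u}" by blast
  then have "card (nbrs E v) \<le> 1" using card_mono[of "{u}"] by fastforce
  with two show False by simp
qed

lemma leaf_succ_unique:
  assumes "leaf_succ E rot l a" and "leaf_succ E rot l b"
  shows "a = b"
proof -
  obtain u k where u: "{u, l} \<in> E" "0 < k" "snd ((face_step rot ^^ k) (u, l)) = a"
    "\<forall>j. 0 < j \<and> j < k \<longrightarrow> \<not> is_leaf E (snd ((face_step rot ^^ j) (u, l)))"
    and leaves: "is_leaf E l" "is_leaf E a"
    using assms(1) unfolding leaf_succ_def by blast
  obtain u' k' where u': "{u', l} \<in> E" "0 < k'" "snd ((face_step rot ^^ k') (u', l)) = b"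
    "\<forall>j. 0 < j \<and> j < k' \<longrightarrow> \<not> is_leaf E (snd ((face_step rot ^^ j) (u', l)))"
    and "is_leaf E b"
    using assms(2) unfolding leaf_succ_def by blast
  obtain p where "nbrs E l = {p}" using is_leaf_nbrs[OF leaves(1)] .
  moreover have "u \<in> nbrs E l" "u' \<in> nbrs E l" using u(1) u'(1) by (simp_all add: nbrs_def)
  ultimately have "u = u'" by simp
  text \<open>Both witnesses follow the same face walk; each stops at its first leaf.\<close>
  then show ?thesis
    using u u' leaves(2) \<open>is_leaf E b\<close> by (metis linorder_neqE_nat)
qed

text \<open>By injectivity of the face step, the walk from (ua, a) is a tail of the walk from (ub, b),
  and the latter meets no leaf strictly before step kb.\<close>
lemma leaf_eq_of_face_walks_meet:
  assumes sg: "simple_graph V E" and rs: "rotation_system V E rot"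
    and da: "(ua, a) \<in> darts E" and db: "(ub, b) \<in> darts E" and leaf: "is_leaf E a"
    and pos: "0 < ka" and le: "ka \<le> kb"
    and meet: "(face_step rot ^^ ka) (ua, a) = (face_step rot ^^ kb) (ub, b)"
    and no_leaf: "\<forall>j. 0 < j \<and> j < kb \<longrightarrow> \<not> is_leaf E (snd ((face_step rot ^^ j) (ub, b)))"
  shows "a = b"
proof -
  let ?g = "face_step rot"
  define m where "m = kb - ka"
  have "(?g ^^ kb) (ub, b) = (?g ^^ ka) ((?g ^^ m) (ub, b))"
  proof -
    have "kb = ka + m" unfolding m_def using le by simp
    then show ?thesis by (simp add: funpow_add)
  qed
  moreover have "(?g ^^ m) (ub, b) \<in> darts E" by (rule face_walk_darts[OF sg rs db])
  ultimately have start_eq: "(ua, a) = (?g ^^ m) (ub, b)"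
    using inj_on_funpow[OF inj_on_face_step[OF sg rs] face_step_darts[OF sg rs]] da meet
    by (metis inj_on_eq_iff)
  show ?thesis
  proof (cases "m = 0")
    case True
    then show ?thesis using start_eq by simp
  next
    case False
    moreover have "m < kb" using pos le unfolding m_def by simp
    ultimately have "\<not> is_leaf E (snd ((?g ^^ m) (ub, b)))" using no_leaf by simp
    with leaf start_eq show ?thesis by (metis snd_conv)
  qed
qed

lemma leaf_succ_inj:
  assumes sg: "simple_graph V E" and rs: "rotation_system V E rot"
    and succ_a: "leaf_succ E rot a l" and succ_b: "leaf_succ E rot b l"
  shows "a = b"
proof -
  let ?g = "face_step rot"
  obtain ua ka where A: "{ua, a} \<in> E" "0 < ka" "snd ((?g ^^ ka) (ua, a)) = l"
    "\<forall>j. 0 < j \<and> j < ka \<longrightarrow> \<not> is_leaf E (snd ((?g ^^ j) (ua, a)))"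
    and leaves: "is_leaf E a" "is_leaf E l"
    using succ_a unfolding leaf_succ_def by blast
  obtain ub kb where B: "{ub, b} \<in> E" "0 < kb" "snd ((?g ^^ kb) (ub, b)) = l"
    "\<forall>j. 0 < j \<and> j < kb \<longrightarrow> \<not> is_leaf E (snd ((?g ^^ j) (ub, b)))"
    and "is_leaf E b"
    using succ_b unfolding leaf_succ_def by blast
  obtain p where p: "nbrs E l = {p}" using is_leaf_nbrs[OF leaves(2)] .
  have enter: "(?g ^^ k) d = (p, l)" if "d \<in> darts E" "snd ((?g ^^ k) d) = l" for d k
  proof -
    obtain x y where xy: "(?g ^^ k) d = (x, y)" by fastforce
    then have "(x, y) \<in> darts E" using face_walk_darts[OF sg rs that(1), of k] by simp
    then have "x \<in> nbrs E l" using that(2) xy by (simp add: darts_def nbrs_def)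
    then show ?thesis using p that(2) xy by simp
  qed
  have da: "(ua, a) \<in> darts E" and db: "(ub, b) \<in> darts E" using A(1) B(1) by (simp_all add: darts_def)
  have meet: "(?g ^^ ka) (ua, a) = (?g ^^ kb) (ub, b)"
    using enter[OF da A(3)] enter[OF db B(3)] by simp
  show ?thesis
  proof (cases "ka \<le> kb")
    case True
    show ?thesis by (rule leaf_eq_of_face_walks_meet[OF sg rs da db leaves(1) A(2) True meet B(4)])
  next
    case False
    then have "kb \<le> ka" by simp
    from leaf_eq_of_face_walks_meet[OF sg rs db da \<open>is_leaf E b\<close> B(2) this meet[symmetric] A(4)]
    show ?thesis by simp
  qed
qed

lemma leaf_succ_irrefl:
  assumes sg: "simple_graph V E" and rs: "rotation_system V E rot"
    and no_deg2: "\<forall>v\<in>V. deg E v \<noteq> 2"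
    and inj: "inj_on f V" and lower: "\<forall>v\<in>V. card (lower_nbrs E f v) \<le> 1"
  shows "\<not> leaf_succ E rot l l"
proof
  assume self: "leaf_succ E rot l l"
  let ?g = "face_step rot"
  obtain u k where A: "{u, l} \<in> E" "0 < k" "snd ((?g ^^ k) (u, l)) = l"
    "\<forall>j. 0 < j \<and> j < k \<longrightarrow> \<not> is_leaf E (snd ((?g ^^ j) (u, l)))"
    using self unfolding leaf_succ_def by blast
  define w where "w i = snd ((?g ^^ i) (u, l))" for i
  have ul: "(u, l) \<in> darts E" using A(1) by (simp add: darts_def)
  have fst_step: "fst ((?g ^^ Suc i) (u, l)) = w i" for i
    unfolding w_def by (simp add: face_step_def)
  have w_step: "w (Suc (Suc i)) = rot (w (Suc i)) (w i)" for i
    using fst_step[of i] unfolding w_def by (simp add: face_step_def)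
  have edge: "{w i, w (Suc i)} \<in> E" for i
    using face_walk_darts[OF sg rs ul, of "Suc i"] fst_step[of i] unfolding w_def
    by (auto simp: darts_def split: prod.splits)
  have no_backtrack: "w (Suc (Suc i)) \<noteq> w i" if "Suc i < k" for i
  proof -
    have not_leaf: "\<not> is_leaf E (w (Suc i))"
      using A(4)[rule_format, of "Suc i"] that unfolding w_def by blast
    have vV: "w (Suc i) \<in> V" using simple_graph_edgeD(2)[OF sg edge[of i]] .
    have wi: "w i \<in> nbrs E (w (Suc i))" using edge[of i] by (simp add: nbrs_def)
    then have "card (nbrs E (w (Suc i))) \<noteq> 0" using simple_graph_finite_nbrs[OF sg] by auto
    then have "2 \<le> card (nbrs E (w (Suc i)))"
      using not_leaf no_deg2 vV unfolding is_leaf_def deg_def by fastforce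
    then show ?thesis using rot_no_fixpoint[OF rs vV wi] w_step[of i] by simp
  qed
  have "w k \<noteq> w 0"
    by (rule nonbacktracking_walk_not_closed[OF sg inj lower, of k w]) (use A(2) edge no_backtrack in auto)
  moreover have "w k = w 0" using A(3) unfolding w_def by simp
  ultimately show False by simp
qed

section \<open>Halin graphs\<close>

lemma nbrs_Un_rel_edges:
  "nbrs (E \<union> {{x, y} | x y. R x y}) v = nbrs E v \<union> {w. R v w} \<union> {w. R w v}"
  unfolding nbrs_def by (auto simp: doubleton_eq_iff)

lemma simple_graph_Un_rel_edges:
  assumes sg: "simple_graph V E" and R: "\<And>x y. R x y \<Longrightarrow> x \<in> V \<and> y \<in> V \<and> x \<noteq> y"
  shows "simple_graph V (E \<union> {{x, y} | x y. R x y})"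
  unfolding simple_graph_def
proof (intro conjI ballI)
  show "finite V" using sg by (simp add: simple_graph_def)
  fix e assume "e \<in> E \<union> {{x, y} | x y. R x y}"
  then consider "e \<in> E" | x y where "e = {x, y}" "R x y" by blast
  then show "\<exists>u v. e = {u, v} \<and> u \<noteq> v \<and> u \<in> V \<and> v \<in> V"
  proof cases
    case 1
    then show ?thesis using sg unfolding simple_graph_def by blast
  next
    case (2 x y)
    then show ?thesis using R by blast
  qed
qed

lemma is_leaf_in_vertices:
  assumes sg: "simple_graph V E" and leaf: "is_leaf E l"
  shows "l \<in> V"
proof -
  obtain p where "nbrs E l = {p}" using is_leaf_nbrs[OF leaf] .
  then have "{p, l} \<in> E" by (simp add: nbrs_def set_eq_iff)
  then show ?thesis using simple_graph_edgeD(2)[OF sg] by blast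
qed

lemma card_lower_nbrs_halin:
  assumes sg: "simple_graph V ET" and rs: "rotation_system V ET rot"
    and lower: "\<forall>v\<in>V. card (lower_nbrs ET f v) \<le> 1" and vV: "v \<in> V"
  shows "card (lower_nbrs (ET \<union> {{l, l'} | l l'. leaf_succ ET rot l l'}) f v) \<le> 3"
proof (cases "is_leaf ET v")
  case True
  let ?S = "{w. leaf_succ ET rot v w}" and ?P = "{w. leaf_succ ET rot w v}"
  obtain p where p: "nbrs ET v = {p}" using is_leaf_nbrs[OF True] .
  have leaves_in_V: "w \<in> V" if "leaf_succ ET rot x w \<or> leaf_succ ET rot w x" for x w
    using that is_leaf_in_vertices[OF sg] unfolding leaf_succ_def by blast
  have fin: "finite ?S" "finite ?P"
    using leaves_in_V sg unfolding simple_graph_def by (blast intro: finite_subset)+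
  have "card ?S \<le> Suc 0"
    unfolding card_le_Suc0_iff_eq[OF fin(1)] using leaf_succ_unique[of ET rot v] by blast
  moreover have "card ?P \<le> Suc 0"
    unfolding card_le_Suc0_iff_eq[OF fin(2)] using leaf_succ_inj[OF sg rs] by blast
  moreover have "card (lower_nbrs (ET \<union> {{l, l'} | l l'. leaf_succ ET rot l l'}) f v)
      \<le> card (nbrs ET v \<union> ?S \<union> ?P)"
  proof (rule card_mono)
    show "finite (nbrs ET v \<union> ?S \<union> ?P)" using fin p by simp
    show "lower_nbrs (ET \<union> {{l, l'} | l l'. leaf_succ ET rot l l'}) f v \<subseteq> nbrs ET v \<union> ?S \<union> ?P"
      using lower_nbrs_subset_nbrs[of "ET \<union> {{l, l'} | l l'. leaf_succ ET rot l l'}" f v]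
      unfolding nbrs_Un_rel_edges .
  qed
  moreover have "card (nbrs ET v \<union> ?S \<union> ?P) \<le> card (nbrs ET v) + card ?S + card ?P"
    using card_Un_le[of "nbrs ET v \<union> ?S" ?P] card_Un_le[of "nbrs ET v" ?S] by linarith
  ultimately show ?thesis using p by simp
next
  case False
  then have "{w. leaf_succ ET rot v w} = {}" "{w. leaf_succ ET rot w v} = {}"
    unfolding leaf_succ_def by simp_all
  then have "lower_nbrs (ET \<union> {{l, l'} | l l'. leaf_succ ET rot l l'}) f v = lower_nbrs ET f v"
    unfolding lower_nbrs_def nbrs_Un_rel_edges by simp
  then show ?thesis using lower vV by fastforce
qed

theorem lemma3p2:
  fixes V :: "'a set" and E :: "'a set set"
  assumes "halin V E"
  shows "AT V E \<le> 4"
proof -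
  obtain ET rot where tree: "is_tree V ET" and rs: "rotation_system V ET rot"
    and no_deg2: "\<forall>v\<in>V. deg ET v \<noteq> 2"
    and E: "E = ET \<union> {{l, l'} | l l'. leaf_succ ET rot l l'}"
    using assms unfolding halin_def by blast
  have sg: "simple_graph V ET" using tree unfolding is_tree_def by simp
  obtain f :: "'a \<Rightarrow> nat" where inj: "inj_on f V" and lower: "\<forall>v\<in>V. card (lower_nbrs ET f v) \<le> 1"
    using tree_ranking[OF tree] by blast
  have "simple_graph V E"
    unfolding E
  proof (rule simple_graph_Un_rel_edges[OF sg])
    fix l l' assume succ: "leaf_succ ET rot l l'"
    then have "l \<in> V" "l' \<in> V" using is_leaf_in_vertices[OF sg] unfolding leaf_succ_def by blast+
    moreover have "l \<noteq> l'" using succ leaf_succ_irrefl[OF sg rs no_deg2 inj lower] by metis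
    ultimately show "l \<in> V \<and> l' \<in> V \<and> l \<noteq> l'" by blast
  qed
  moreover have "\<forall>v\<in>V. card (lower_nbrs E f v) \<le> 3"
    unfolding E using card_lower_nbrs_halin[OF sg rs lower] by blast
  ultimately show ?thesis using AT_le_Suc_ranking[OF _ inj] by (simp add: numeral_eq_Suc)
qed

end
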